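(* Let $G$ be a connected (finite, simple) graph. Then $G$ is (claw, bull)-free if and only if it belongs to one of the following (disjoint) classes of graphs: (i) the class of graphs which are expansions of paths of length at least four; (ii) the class of graphs which are expansions of cycles of length at least six; (iii) the class of connected graphs which are complements of triangle-free graphs.
   Context: A claw is a graph isomorphic to $K_{1,3}$. A bull is the graph obtained from a triangle by adding two pendant edges at two different vertices (so it has 5 vertices and 5 edges). A graph is (claw, bull)-free if it has no induced subgraph isomorphic to a claw or to a bull. An expansion of a graph $F$ with vertex set $\{v_1,\dots,v_n\}$ is any graph $H$ obtained from $F$ by replacing each vertex $v_i$ by a nonempty clique $K^{[i]}$, the cliques being pairwise vertex-disjoint, and adding all edges between $V(K^{[i]})$ and $V(K^{[j]})$ whenever $v_iv_j\in E(F)$ (and no other edges between different cliques). The length of a path is its number of edges. *)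

theory Defs
  imports Main
begin

definition graph :: "'a set \<Rightarrow> ('a \<Rightarrow> 'a \<Rightarrow> bool) \<Rightarrow> bool" where
  "graph V E \<longleftrightarrow> finite V \<and> (\<forall>x y. E x y \<longrightarrow> x \<in> V \<and> y \<in> V)
     \<and> (\<forall>x y. E x y \<longrightarrow> E y x) \<and> (\<forall>x. \<not> E x x)"

definition connected_graph :: "'a set \<Rightarrow> ('a \<Rightarrow> 'a \<Rightarrow> bool) \<Rightarrow> bool" where
  "connected_graph V E \<longleftrightarrow> V \<noteq> {} \<and> (\<forall>x\<in>V. \<forall>y\<in>V. E\<^sup>*\<^sup>* x y)"

definition has_induced :: "'a set \<Rightarrow> ('a \<Rightarrow> 'a \<Rightarrow> bool) \<Rightarrow> 'b set \<Rightarrow> ('b \<Rightarrow> 'b \<Rightarrow> bool) \<Rightarrow> bool" where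
  "has_induced V E W F \<longleftrightarrow> (\<exists>f. inj_on f W \<and> f ` W \<subseteq> V \<and>
      (\<forall>x\<in>W. \<forall>y\<in>W. E (f x) (f y) \<longleftrightarrow> F x y))"

definition claw_V :: "nat set" where "claw_V = {0,1,2,3}"
definition claw_E :: "nat \<Rightarrow> nat \<Rightarrow> bool" where
  "claw_E x y \<longleftrightarrow> (x = 0 \<and> y \<in> {1,2,3}) \<or> (y = 0 \<and> x \<in> {1,2,3})"

definition bull_V :: "nat set" where "bull_V = {0,1,2,3,4}"
definition bull_E :: "nat \<Rightarrow> nat \<Rightarrow> bool" where
  "bull_E x y \<longleftrightarrow> {x,y} \<in> {{0,1},{1,2},{0,2},{0,3},{1,4}}"

definition claw_bull_free :: "'a set \<Rightarrow> ('a \<Rightarrow> 'a \<Rightarrow> bool) \<Rightarrow> bool" where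
  "claw_bull_free V E \<longleftrightarrow> \<not> has_induced V E claw_V claw_E \<and> \<not> has_induced V E bull_V bull_E"

text \<open>Path of length k (k edges): vertices 0..k, i adjacent to i+1.\<close>
definition path_V :: "nat \<Rightarrow> nat set" where "path_V k = {0..k}"
definition path_E :: "nat \<Rightarrow> nat \<Rightarrow> nat \<Rightarrow> bool" where
  "path_E k i j \<longleftrightarrow> i \<le> k \<and> j \<le> k \<and> (j = i + 1 \<or> i = j + 1)"

definition cycle_V :: "nat \<Rightarrow> nat set" where "cycle_V k = {0..<k}"
definition cycle_E :: "nat \<Rightarrow> nat \<Rightarrow> nat \<Rightarrow> bool" where
  "cycle_E k i j \<longleftrightarrow> i < k \<and> j < k \<and> (j = (i + 1) mod k \<or> i = (j + 1) mod k)"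

text \<open>(V,E) is an expansion of (W,F): each vertex w of W is replaced by the
  nonempty clique phi^-1(w); distinct cliques are completely joined iff
  the corresponding vertices are adjacent in F, otherwise anticomplete.\<close>
definition expansion_of :: "'a set \<Rightarrow> ('a \<Rightarrow> 'a \<Rightarrow> bool) \<Rightarrow> 'b set \<Rightarrow> ('b \<Rightarrow> 'b \<Rightarrow> bool) \<Rightarrow> bool" where
  "expansion_of V E W F \<longleftrightarrow> (\<exists>\<phi>. \<phi> ` V = W \<and>
      (\<forall>x\<in>V. \<forall>y\<in>V. x \<noteq> y \<longrightarrow> (E x y \<longleftrightarrow> \<phi> x = \<phi> y \<or> F (\<phi> x) (\<phi> y))))"

definition complement :: "'a set \<Rightarrow> ('a \<Rightarrow> 'a \<Rightarrow> bool) \<Rightarrow> 'a \<Rightarrow> 'a \<Rightarrow> bool" where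
  "complement V E x y \<longleftrightarrow> x \<in> V \<and> y \<in> V \<and> x \<noteq> y \<and> \<not> E x y"

definition triangle_free :: "'a set \<Rightarrow> ('a \<Rightarrow> 'a \<Rightarrow> bool) \<Rightarrow> bool" where
  "triangle_free V E \<longleftrightarrow> \<not> (\<exists>x\<in>V. \<exists>y\<in>V. \<exists>z\<in>V. E x y \<and> E y z \<and> E x z)"

end

theory Submission
  imports Defs
begin

text \<open>
  Expansions of paths and of cycles of length at least four are claw- and bull-free: neither the
  claw nor the bull has two adjacent vertices with the same other neighbours, so an induced copy
  in an expansion meets every clique at most once and is already an induced copy in the path or
  cycle. Graphs whose complement is triangle-free are claw- and bull-free because the claw and
  the bull both contain three pairwise non-adjacent vertices.

  Conversely, let G be connected, claw- and bull-free, with three pairwise non-adjacent vertices.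
  Starting from such a triple, connectivity and the two forbidden subgraphs yield an induced path
  on five vertices. Take a largest induced subgraph S that is an expansion of a path 0, ..., k
  with k \<ge> 4. A case analysis with claws and bulls shows that a vertex outside S with a
  neighbour in S is complete to the cliques with indices in [m - 1, m + 1] for some m and
  anticomplete to the others, or sees exactly one end clique, or exactly both end cliques. In the
  first two cases the vertex could be added to S, so only the third occurs. Then claw-freeness
  and connectivity force every vertex outside S to see exactly both end cliques and all of them
  to form one clique, which closes S into an expansion of a cycle of length k + 2.
\<close>

section \<open>Claws and bulls\<close>

lemma bull_E_iff:
  "bull_E x y \<longleftrightarrow> {x, y} = {0, 1} \<or> {x, y} = {1, 2} \<or> {x, y} = {0, 2} \<or> {x, y} = {0, 3} \<or> {x, y} = {1, 4}"
  unfolding bull_E_def by simp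

lemma graph_sym: "graph V E \<Longrightarrow> E x y \<Longrightarrow> E y x"
  and graph_irrefl: "graph V E \<Longrightarrow> \<not> E x x"
  and graph_adj_in: "graph V E \<Longrightarrow> E x y \<Longrightarrow> x \<in> V" "graph V E \<Longrightarrow> E x y \<Longrightarrow> y \<in> V"
  unfolding graph_def by blast+

lemma has_induced_claw_iff:
  assumes "graph V E"
  shows "has_induced V E claw_V claw_E \<longleftrightarrow>
    (\<exists>c a b d. E c a \<and> E c b \<and> E c d \<and> \<not> E a b \<and> \<not> E a d \<and> \<not> E b d \<and> a \<noteq> b \<and> a \<noteq> d \<and> b \<noteq> d)"
proof
  assume "has_induced V E claw_V claw_E"
  then obtain f where "inj_on f claw_V" "\<forall>x\<in>claw_V. \<forall>y\<in>claw_V. E (f x) (f y) \<longleftrightarrow> claw_E x y"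
    unfolding has_induced_def by blast
  then show "\<exists>c a b d. E c a \<and> E c b \<and> E c d \<and> \<not> E a b \<and> \<not> E a d \<and> \<not> E b d \<and> a \<noteq> b \<and> a \<noteq> d \<and> b \<noteq> d"
    by (intro exI[of _ "f 0"] exI[of _ "f 1"] exI[of _ "f 2"] exI[of _ "f 3"])
      (simp add: claw_V_def claw_E_def inj_on_def)
next
  assume "\<exists>c a b d. E c a \<and> E c b \<and> E c d \<and> \<not> E a b \<and> \<not> E a d \<and> \<not> E b d \<and> a \<noteq> b \<and> a \<noteq> d \<and> b \<noteq> d"
  then obtain c a b d where
    edges: "E c a" "E c b" "E c d" "\<not> E a b" "\<not> E a d" "\<not> E b d" "a \<noteq> b" "a \<noteq> d" "b \<noteq> d"
    by blast
  note G = graph_sym[OF assms] graph_irrefl[OF assms] graph_adj_in[OF assms]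
  define f :: "nat \<Rightarrow> 'a" where "f n = (if n = 0 then c else if n = 1 then a else if n = 2 then b else d)" for n
  have more: "c \<noteq> a" "c \<noteq> b" "c \<noteq> d" "E a c" "E b c" "E d c" "\<not> E b a" "\<not> E d a" "\<not> E d b"
    "\<not> E c c" "\<not> E a a" "\<not> E b b" "\<not> E d d" "c \<in> V" "a \<in> V" "b \<in> V" "d \<in> V"
    using edges G by metis+
  have "inj_on f claw_V" "f ` claw_V \<subseteq> V"
    using edges more by (auto simp: f_def claw_V_def inj_on_def)
  moreover have "\<forall>x\<in>claw_V. \<forall>y\<in>claw_V. E (f x) (f y) \<longleftrightarrow> claw_E x y"
    using edges more by (auto simp: f_def claw_V_def claw_E_def)
  ultimately show "has_induced V E claw_V claw_E"
    unfolding has_induced_def by blast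
qed

lemma has_induced_bull_iff:
  assumes "graph V E"
  shows "has_induced V E bull_V bull_E \<longleftrightarrow>
    (\<exists>a b c d e. E a b \<and> E b c \<and> E a c \<and> E a d \<and> \<not> E b d \<and> \<not> E c d \<and>
                  E b e \<and> \<not> E a e \<and> \<not> E c e \<and> \<not> E d e)"
proof
  assume "has_induced V E bull_V bull_E"
  then obtain f where "\<forall>x\<in>bull_V. \<forall>y\<in>bull_V. E (f x) (f y) \<longleftrightarrow> bull_E x y"
    unfolding has_induced_def by blast
  then show "\<exists>a b c d e. E a b \<and> E b c \<and> E a c \<and> E a d \<and> \<not> E b d \<and> \<not> E c d \<and>
                  E b e \<and> \<not> E a e \<and> \<not> E c e \<and> \<not> E d e"
    by (intro exI[of _ "f 0"] exI[of _ "f 1"] exI[of _ "f 2"] exI[of _ "f 3"] exI[of _ "f 4"])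
      (simp add: bull_V_def bull_E_iff doubleton_eq_iff)
next
  assume "\<exists>a b c d e. E a b \<and> E b c \<and> E a c \<and> E a d \<and> \<not> E b d \<and> \<not> E c d \<and>
                  E b e \<and> \<not> E a e \<and> \<not> E c e \<and> \<not> E d e"
  then obtain a b c d e where edges: "E a b" "E b c" "E a c" "E a d" "\<not> E b d" "\<not> E c d"
    "E b e" "\<not> E a e" "\<not> E c e" "\<not> E d e"
    by blast
  note G = graph_sym[OF assms] graph_irrefl[OF assms] graph_adj_in[OF assms]
  define f :: "nat \<Rightarrow> 'a" where
    "f n = (if n = 0 then a else if n = 1 then b else if n = 2 then c else if n = 3 then d else e)" for n
  have more: "a \<noteq> b" "a \<noteq> c" "a \<noteq> d" "a \<noteq> e" "b \<noteq> c" "b \<noteq> d" "b \<noteq> e" "c \<noteq> d" "c \<noteq> e" "d \<noteq> e"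
    "E b a" "E c b" "E c a" "E d a" "\<not> E d b" "\<not> E d c" "E e b" "\<not> E e a" "\<not> E e c" "\<not> E e d"
    "\<not> E a a" "\<not> E b b" "\<not> E c c" "\<not> E d d" "\<not> E e e" "a \<in> V" "b \<in> V" "c \<in> V" "d \<in> V" "e \<in> V"
    using edges G by metis+
  have "inj_on f bull_V" "f ` bull_V \<subseteq> V"
    using more by (auto simp: f_def bull_V_def inj_on_def)
  moreover have "\<forall>x\<in>bull_V. \<forall>y\<in>bull_V. E (f x) (f y) \<longleftrightarrow> bull_E x y"
    using edges more by (auto simp: f_def bull_V_def bull_E_iff doubleton_eq_iff)
  ultimately show "has_induced V E bull_V bull_E"
    unfolding has_induced_def by blast
qed

lemma claw_free_if_degree_le_2:
  assumes "graph V E" and "\<And>x a b d. E x a \<Longrightarrow> E x b \<Longrightarrow> E x d \<Longrightarrow> a = b \<or> a = d \<or> b = d"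
  shows "\<not> has_induced V E claw_V claw_E"
  using assms(2) unfolding has_induced_claw_iff[OF assms(1)] by blast

lemma bull_free_if_triangle_free:
  assumes "graph V E" and "triangle_free V E"
  shows "\<not> has_induced V E bull_V bull_E"
proof
  assume "has_induced V E bull_V bull_E"
  then obtain a b c where "E a b" "E b c" "E a c"
    unfolding has_induced_bull_iff[OF assms(1)] by blast
  moreover have "a \<in> V" "b \<in> V" "c \<in> V"
    using calculation graph_adj_in[OF assms(1)] by blast+
  ultimately show False
    using assms(2) unfolding triangle_free_def by blast
qed

lemma claw_bull_free_if_complement_triangle_free:
  assumes "graph V E" and "triangle_free V (complement V E)"
  shows "claw_bull_free V E"
proof -
  have no_triple: False
    if "a \<noteq> b" "a \<noteq> c" "b \<noteq> c" "\<not> E a b" "\<not> E a c" "\<not> E b c" "a \<in> V" "b \<in> V" "c \<in> V"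
    for a b c
  proof -
    have "\<not> E b a" "\<not> E c a" "\<not> E c b"
      using that graph_sym[OF assms(1)] by blast+
    then show False
      using that assms(2) unfolding triangle_free_def complement_def by blast
  qed
  note in_V = graph_adj_in[OF assms(1)]
  have "\<not> has_induced V E claw_V claw_E"
  proof
    assume "has_induced V E claw_V claw_E"
    then obtain c a b d where "E c a" "E c b" "E c d" "\<not> E a b" "\<not> E a d" "\<not> E b d"
      "a \<noteq> b" "a \<noteq> d" "b \<noteq> d"
      unfolding has_induced_claw_iff[OF assms(1)] by blast
    then show False
      using no_triple[of a b d] in_V by blast
  qed
  moreover have "\<not> has_induced V E bull_V bull_E"
  proof
    assume "has_induced V E bull_V bull_E"
    then obtain a b c d e where "E a b" "E b c" "E a c" "E a d" "\<not> E b d" "\<not> E c d"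
      "E b e" "\<not> E a e" "\<not> E c e" "\<not> E d e"
      unfolding has_induced_bull_iff[OF assms(1)] by blast
    moreover have "c \<noteq> d" "c \<noteq> e" "d \<noteq> e"
      using calculation by blast+
    ultimately show False
      using no_triple[of c d e] in_V by blast
  qed
  ultimately show ?thesis
    unfolding claw_bull_free_def by blast
qed

section \<open>Expansions\<close>

definition no_true_twins :: "'b set \<Rightarrow> ('b \<Rightarrow> 'b \<Rightarrow> bool) \<Rightarrow> bool" where
  "no_true_twins U H \<longleftrightarrow> (\<forall>x\<in>U. \<forall>y\<in>U. x \<noteq> y \<and> H x y \<longrightarrow> (\<exists>z\<in>U - {x, y}. H z x \<noteq> H z y))"

lemma no_true_twins_claw: "no_true_twins claw_V claw_E"
  unfolding no_true_twins_def claw_V_def claw_E_def by (simp add: insert_Diff_if)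

lemma no_true_twins_bull: "no_true_twins bull_V bull_E"
  unfolding no_true_twins_def bull_V_def by (simp add: insert_Diff_if bull_E_iff doubleton_eq_iff)

lemma has_induced_from_expansion:
  assumes exp: "expansion_of V E W F" and "graph W F"
    and H: "has_induced V E U H" "no_true_twins U H" "\<forall>x\<in>U. \<not> H x x"
  shows "has_induced W F U H"
proof -
  obtain f where f: "inj_on f U" "f ` U \<subseteq> V" "\<forall>x\<in>U. \<forall>y\<in>U. E (f x) (f y) \<longleftrightarrow> H x y"
    using H(1) unfolding has_induced_def by blast
  obtain \<phi> where \<phi>: "\<phi> ` V = W" "\<forall>x\<in>V. \<forall>y\<in>V. x \<noteq> y \<longrightarrow> (E x y \<longleftrightarrow> \<phi> x = \<phi> y \<or> F (\<phi> x) (\<phi> y))"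
    using exp unfolding expansion_of_def by blast
  have adj: "H x y \<longleftrightarrow> \<phi> (f x) = \<phi> (f y) \<or> F (\<phi> (f x)) (\<phi> (f y))"
    if "x \<in> U" "y \<in> U" "x \<noteq> y" for x y
  proof -
    have "f x \<noteq> f y" "f x \<in> V" "f y \<in> V"
      using inj_on_contraD[OF f(1) that(3,1,2)] f(2) that by auto
    then have "E (f x) (f y) \<longleftrightarrow> \<phi> (f x) = \<phi> (f y) \<or> F (\<phi> (f x)) (\<phi> (f y))"
      using \<phi>(2) by blast
    then show ?thesis
      using f(3) that by blast
  qed
  have inj: "inj_on (\<phi> \<circ> f) U"
  proof (rule inj_onI, rule ccontr)
    fix x y assume xy: "x \<in> U" "y \<in> U" "(\<phi> \<circ> f) x = (\<phi> \<circ> f) y" "x \<noteq> y"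
    then have "H x y"
      using adj[OF xy(1,2,4)] by simp
    then obtain z where z: "z \<in> U" "z \<noteq> x" "z \<noteq> y" "H z x \<noteq> H z y"
      using H(2) xy unfolding no_true_twins_def by blast
    have "H z x \<longleftrightarrow> H z y"
      using adj[OF z(1) xy(1) z(2)] adj[OF z(1) xy(2) z(3)] xy(3) by simp
    then show False
      using z(4) by blast
  qed
  have "(\<phi> \<circ> f) ` U \<subseteq> W"
    using f(2) \<phi>(1) by auto
  moreover have "F ((\<phi> \<circ> f) x) ((\<phi> \<circ> f) y) \<longleftrightarrow> H x y" if "x \<in> U" "y \<in> U" for x y
  proof (cases "x = y")
    case True
    then show ?thesis
      using H(3) \<open>graph W F\<close> that by (simp add: graph_def)
  next
    case False
    then have "\<phi> (f x) \<noteq> \<phi> (f y)"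
      using inj_on_contraD[OF inj False that] by simp
    then show ?thesis
      using adj False that by simp
  qed
  ultimately show ?thesis
    unfolding has_induced_def using inj by blast
qed

lemma claw_bull_free_expansion:
  assumes "expansion_of V E W F" and "graph W F" and "claw_bull_free W F"
  shows "claw_bull_free V E"
proof -
  have "\<forall>x\<in>claw_V. \<not> claw_E x x" "\<forall>x\<in>bull_V. \<not> bull_E x x"
    by (auto simp: claw_E_def bull_E_iff)
  then have "\<not> has_induced V E claw_V claw_E" "\<not> has_induced V E bull_V bull_E"
    using assms(3) has_induced_from_expansion[OF assms(1,2) _ no_true_twins_claw]
      has_induced_from_expansion[OF assms(1,2) _ no_true_twins_bull]
    unfolding claw_bull_free_def by blast+
  then show ?thesis
    unfolding claw_bull_free_def by blast
qed

lemma cycle_E_iff: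
  "cycle_E k i j \<longleftrightarrow> i < k \<and> j < k \<and>
     (j = i + 1 \<or> i = j + 1 \<or> (i + 1 = k \<and> j = 0) \<or> (j + 1 = k \<and> i = 0))"
proof (cases "i < k \<and> j < k")
  case True
  then have "(i + 1) mod k = (if i + 1 = k then 0 else i + 1)" "(j + 1) mod k = (if j + 1 = k then 0 else j + 1)"
    by auto
  then show ?thesis
    unfolding cycle_E_def using True by auto
qed (auto simp: cycle_E_def)

lemma graph_path: "graph (path_V k) (path_E k)"
  by (auto simp: graph_def path_V_def path_E_def)

lemma graph_cycle: "3 \<le> k \<Longrightarrow> graph (cycle_V k) (cycle_E k)"
  by (auto simp: graph_def cycle_V_def cycle_E_iff)

lemma claw_bull_free_path: "claw_bull_free (path_V k) (path_E k)"
proof -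
  have "\<not> has_induced (path_V k) (path_E k) claw_V claw_E"
    by (rule claw_free_if_degree_le_2[OF graph_path]) (auto simp: path_E_def)
  moreover have "\<not> has_induced (path_V k) (path_E k) bull_V bull_E"
    by (rule bull_free_if_triangle_free[OF graph_path]) (auto simp: triangle_free_def path_E_def)
  ultimately show ?thesis
    unfolding claw_bull_free_def by blast
qed

lemma claw_bull_free_cycle:
  assumes "4 \<le> k"
  shows "claw_bull_free (cycle_V k) (cycle_E k)"
proof -
  have G: "graph (cycle_V k) (cycle_E k)"
    using assms by (simp add: graph_cycle)
  have "\<not> has_induced (cycle_V k) (cycle_E k) claw_V claw_E"
    by (rule claw_free_if_degree_le_2[OF G]) (auto simp: cycle_E_iff)
  moreover have "\<not> has_induced (cycle_V k) (cycle_E k) bull_V bull_E"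
    by (rule bull_free_if_triangle_free[OF G]) (use assms in \<open>auto simp: triangle_free_def cycle_E_iff\<close>)
  ultimately show ?thesis
    unfolding claw_bull_free_def by blast
qed

lemma claw_bull_free_if_expansion_or_co_triangle_free:
  assumes "graph V E"
    and "(\<exists>k. expansion_of V E (path_V k) (path_E k)) \<or> (\<exists>k\<ge>4. expansion_of V E (cycle_V k) (cycle_E k))
      \<or> triangle_free V (complement V E)"
  shows "claw_bull_free V E"
  using assms(2) claw_bull_free_expansion[OF _ graph_path claw_bull_free_path]
    claw_bull_free_expansion[OF _ graph_cycle claw_bull_free_cycle]
    claw_bull_free_if_complement_triangle_free[OF assms(1)]
  by fastforce

section \<open>Path expansions\<close>

definition path_expansion :: "('a \<Rightarrow> 'a \<Rightarrow> bool) \<Rightarrow> 'a set \<Rightarrow> nat \<Rightarrow> ('a \<Rightarrow> nat) \<Rightarrow> bool" where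
  "path_expansion E S k \<phi> \<longleftrightarrow> \<phi> ` S = {0..k} \<and>
     (\<forall>x\<in>S. \<forall>y\<in>S. E x y \<longleftrightarrow> x \<noteq> y \<and> \<phi> x \<le> \<phi> y + 1 \<and> \<phi> y \<le> \<phi> x + 1)"

lemma path_expansion_adj:
  "path_expansion E S k \<phi> \<Longrightarrow> x \<in> S \<Longrightarrow> y \<in> S \<Longrightarrow> E x y \<longleftrightarrow> x \<noteq> y \<and> \<phi> x \<le> \<phi> y + 1 \<and> \<phi> y \<le> \<phi> x + 1"
  unfolding path_expansion_def by blast

lemma path_expansion_le: "path_expansion E S k \<phi> \<Longrightarrow> x \<in> S \<Longrightarrow> \<phi> x \<le> k"
  unfolding path_expansion_def by auto

lemma path_expansion_surj: "path_expansion E S k \<phi> \<Longrightarrow> i \<le> k \<Longrightarrow> \<exists>x\<in>S. \<phi> x = i"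
  unfolding path_expansion_def by (metis atLeastAtMost_iff imageE zero_le)

lemma path_expansion_expansion_of:
  assumes "path_expansion E S k \<phi>"
  shows "expansion_of S E (path_V k) (path_E k)"
proof -
  have "E x y \<longleftrightarrow> \<phi> x = \<phi> y \<or> path_E k (\<phi> x) (\<phi> y)" if "x \<in> S" "y \<in> S" "x \<noteq> y" for x y
    using that path_expansion_adj[OF assms] path_expansion_le[OF assms] unfolding path_E_def by auto
  moreover have "\<phi> ` S = path_V k"
    using assms unfolding path_expansion_def path_V_def by blast
  ultimately show ?thesis
    unfolding expansion_of_def by blast
qed

lemma path_expansion_mirror:
  assumes "path_expansion E S k \<phi>"
  shows "path_expansion E S k (\<lambda>x. k - \<phi> x)"
proof -
  have "(\<lambda>x. k - \<phi> x) ` S = (\<lambda>i. k - i) ` \<phi> ` S"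
    by (simp add: image_image)
  also have "\<dots> = (\<lambda>i. k - i) ` {0..k}"
    using assms unfolding path_expansion_def by simp
  also have "\<dots> = {0..k}"
  proof -
    have "i \<in> (\<lambda>i. k - i) ` {0..k}" if "i \<le> k" for i
      using that by (intro image_eqI[of _ _ "k - i"]) auto
    then show ?thesis
      by auto
  qed
  finally have "(\<lambda>x. k - \<phi> x) ` S = {0..k}" .
  moreover have "E x y \<longleftrightarrow> x \<noteq> y \<and> k - \<phi> x \<le> k - \<phi> y + 1 \<and> k - \<phi> y \<le> k - \<phi> x + 1"
    if "x \<in> S" "y \<in> S" for x y
    using path_expansion_adj[OF assms that] path_expansion_le[OF assms that(1)]
      path_expansion_le[OF assms that(2)] by auto
  ultimately show ?thesis
    unfolding path_expansion_def by blast
qed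

lemma path_expansion_insert:
  assumes pe: "path_expansion E S k \<phi>" and "v \<notin> S" "\<not> E v v" "\<forall>x\<in>S. E x v \<longleftrightarrow> E v x"
    and "i \<le> k + 1" "\<forall>x\<in>S. E v x \<longleftrightarrow> \<phi> x \<le> i + 1 \<and> i \<le> \<phi> x + 1"
  shows "path_expansion E (insert v S) (max k i) (\<phi>(v := i))"
proof -
  have "(\<phi>(v := i)) ` insert v S = insert i (\<phi> ` S)"
    using \<open>v \<notin> S\<close> by auto
  also have "\<dots> = {0..max k i}"
    using pe \<open>i \<le> k + 1\<close> unfolding path_expansion_def by (auto simp: max_def)
  finally show ?thesis
    using assms path_expansion_adj[OF pe] unfolding path_expansion_def by auto
qed

lemma has_induced_path_imp_path_expansion:
  assumes "has_induced V E (path_V k) (path_E k)"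
  shows "\<exists>S \<phi>. S \<subseteq> V \<and> path_expansion E S k \<phi>"
proof -
  obtain f where f: "inj_on f {0..k}" "f ` {0..k} \<subseteq> V"
    "\<forall>i\<in>{0..k}. \<forall>j\<in>{0..k}. E (f i) (f j) \<longleftrightarrow> path_E k i j"
    using assms unfolding has_induced_def path_V_def by blast
  define \<phi> where "\<phi> = the_inv_into {0..k} f"
  have "E (f i) (f j) \<longleftrightarrow> f i \<noteq> f j \<and> \<phi> (f i) \<le> \<phi> (f j) + 1 \<and> \<phi> (f j) \<le> \<phi> (f i) + 1"
    if "i \<in> {0..k}" "j \<in> {0..k}" for i j
    using f that inj_on_eq_iff[OF f(1) that] unfolding \<phi>_def path_E_def
    by (auto simp: the_inv_into_f_f)
  then have "path_expansion E (f ` {0..k}) k \<phi>"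
    unfolding path_expansion_def \<phi>_def using the_inv_into_onto[OF f(1)] by blast
  then show ?thesis
    using f(2) by blast
qed

section \<open>Vertices attached to a path expansion\<close>

locale claw_bull_free_graph =
  fixes V :: "'a set" and E :: "'a \<Rightarrow> 'a \<Rightarrow> bool"
  assumes graph: "graph V E" and claw_bull_free: "claw_bull_free V E"
begin

lemma adj_sym: "E x y \<Longrightarrow> E y x"
  using graph by (rule graph_sym)

lemma adj_irrefl: "\<not> E x x"
  using graph by (rule graph_irrefl)

lemma adj_in_V: "E x y \<Longrightarrow> x \<in> V" "E x y \<Longrightarrow> y \<in> V"
  using graph_adj_in[OF graph] by blast+

lemma no_claw:
  assumes "E c a" "E c b" "E c d" "\<not> E a b" "\<not> E a d" "\<not> E b d" "a \<noteq> b" "a \<noteq> d" "b \<noteq> d"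
  shows False
  using claw_bull_free assms unfolding claw_bull_free_def has_induced_claw_iff[OF graph] by blast

lemma no_bull:
  assumes "E a b" "E b c" "E a c" "E a d" "\<not> E b d" "\<not> E c d" "E b e" "\<not> E a e" "\<not> E c e" "\<not> E d e"
  shows False
  using claw_bull_free assms unfolding claw_bull_free_def has_induced_bull_iff[OF graph] by blast

end

locale outer_vertex = claw_bull_free_graph +
  fixes S :: "'a set" and k :: nat and \<phi> :: "'a \<Rightarrow> nat" and v :: 'a
  assumes path_exp: "path_expansion E S k \<phi>" and k_ge_4: "4 \<le> k" and v_notin: "v \<notin> S"
begin

definition touches :: "nat \<Rightarrow> bool" where
  "touches i \<longleftrightarrow> (\<exists>x\<in>S. \<phi> x = i \<and> E v x)"

definition covers :: "nat \<Rightarrow> bool" where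
  "covers i \<longleftrightarrow> (\<forall>x\<in>S. \<phi> x = i \<longrightarrow> E v x)"

lemma adj_v_sym [simp]: "E x v \<longleftrightarrow> E v x"
  using adj_sym by blast

lemma adj_S: "x \<in> S \<Longrightarrow> y \<in> S \<Longrightarrow> E x y \<longleftrightarrow> x \<noteq> y \<and> \<phi> x \<le> \<phi> y + 1 \<and> \<phi> y \<le> \<phi> x + 1"
  using path_exp by (rule path_expansion_adj)

lemma v_ne [simp]: "x \<in> S \<Longrightarrow> x \<noteq> v" "x \<in> S \<Longrightarrow> v \<noteq> x"
  using v_notin by blast+

lemma touches_le: "touches i \<Longrightarrow> i \<le> k"
  using path_expansion_le[OF path_exp] unfolding touches_def by blast

lemma covers_imp_touches: "i \<le> k \<Longrightarrow> covers i \<Longrightarrow> touches i"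
  using path_expansion_surj[OF path_exp] unfolding touches_def covers_def by blast

lemma touchesE:
  assumes "touches i" obtains x where "x \<in> S" "\<phi> x = i" "E v x"
  using assms unfolding touches_def by blast

lemma not_coversE:
  assumes "\<not> covers i" obtains x where "x \<in> S" "\<phi> x = i" "\<not> E v x"
  using assms unfolding covers_def by blast

lemma not_touchesE:
  assumes "i \<le> k" "\<not> touches i" obtains x where "x \<in> S" "\<phi> x = i" "\<not> E v x"
  using path_expansion_surj[OF path_exp assms(1)] assms(2) unfolding touches_def by blast

lemma touches_inner_imp_covers_side:
  assumes "0 < i" "i < k" "touches i"
  shows "covers (i - 1) \<or> covers (i + 1)"
proof (rule ccontr)
  assume "\<not> (covers (i - 1) \<or> covers (i + 1))"
  then obtain w u where "w \<in> S" "\<phi> w = i - 1" "\<not> E v w" "u \<in> S" "\<phi> u = i + 1" "\<not> E v u"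
    using not_coversE by metis
  moreover obtain x where "x \<in> S" "\<phi> x = i" "E v x"
    using assms(3) by (rule touchesE)
  ultimately show False
    using assms(1) by - (rule no_claw[of x w v u]; auto simp: adj_S)
qed

lemma partly_touched_imp_touches_after:
  assumes "i + 2 \<le> k" "touches i" "\<not> covers i"
  shows "touches (i + 1) \<or> touches (i + 2)"
proof (rule ccontr)
  assume "\<not> (touches (i + 1) \<or> touches (i + 2))"
  moreover have "i + 1 \<le> k"
    using assms(1) by simp
  ultimately obtain w t where "w \<in> S" "\<phi> w = i + 1" "\<not> E v w" "t \<in> S" "\<phi> t = i + 2" "\<not> E v t"
    using assms(1) not_touchesE by metis
  moreover obtain x x' where "x \<in> S" "\<phi> x = i" "E v x" "x' \<in> S" "\<phi> x' = i" "\<not> E v x'"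
    using assms(2,3) touchesE not_coversE by metis
  ultimately show False
    by - (rule no_bull[of x w x' v t]; auto simp: adj_S)
qed

lemma partly_touched_imp_touches_before:
  assumes "2 \<le> i" "touches i" "\<not> covers i"
  shows "touches (i - 1) \<or> touches (i - 2)"
proof (rule ccontr)
  assume "\<not> (touches (i - 1) \<or> touches (i - 2))"
  moreover have "i - 1 \<le> k" "i - 2 \<le> k"
    using touches_le[OF assms(2)] by auto
  ultimately obtain w t where "w \<in> S" "\<phi> w = i - 1" "\<not> E v w" "t \<in> S" "\<phi> t = i - 2" "\<not> E v t"
    using not_touchesE by metis
  moreover obtain x x' where "x \<in> S" "\<phi> x = i" "E v x" "x' \<in> S" "\<phi> x' = i" "\<not> E v x'"
    using assms(2,3) touchesE not_coversE by metis
  ultimately show False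
    using assms(1) by - (rule no_bull[of x w x' v t]; auto simp: adj_S)
qed

lemma touches_adjacent_imp_covers_side:
  assumes "0 < i" "i + 2 \<le> k" "touches i" "touches (i + 1)"
  shows "covers (i - 1) \<or> covers (i + 2)"
proof (rule ccontr)
  assume "\<not> (covers (i - 1) \<or> covers (i + 2))"
  then obtain w z where "w \<in> S" "\<phi> w = i - 1" "\<not> E v w" "z \<in> S" "\<phi> z = i + 2" "\<not> E v z"
    using not_coversE by metis
  moreover obtain x y where "x \<in> S" "\<phi> x = i" "E v x" "y \<in> S" "\<phi> y = i + 1" "E v y"
    using assms(3,4) touchesE by metis
  ultimately show False
    using assms(1) by - (rule no_bull[of x y v w z]; auto simp: adj_S)
qed

lemma touches_ends_imp_not_touches_inner:
  assumes "touches 0" "touches k" "2 \<le> j" "j + 2 \<le> k"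
  shows "\<not> touches j"
proof
  assume "touches j"
  then obtain x y z where "x \<in> S" "\<phi> x = 0" "E v x" "y \<in> S" "\<phi> y = k" "E v y"
    "z \<in> S" "\<phi> z = j" "E v z"
    using assms(1,2) touchesE by metis
  then show False
    using assms(3,4) by - (rule no_claw[of v x y z]; auto simp: adj_S)
qed

lemma touches_ends_imp_not_touches_second:
  assumes "touches 0" "touches k"
  shows "\<not> touches 1" "\<not> touches (k - 1)"
proof -
  obtain x y where x: "x \<in> S" "\<phi> x = 0" "E v x" and y: "y \<in> S" "\<phi> y = k" "E v y"
    using assms touchesE by metis
  have "2 \<le> k" "k - 2 \<le> k" "\<not> touches 2" "\<not> touches (k - 2)"
    using touches_ends_imp_not_touches_inner[OF assms] k_ge_4 by auto
  then obtain u u' where u: "u \<in> S" "\<phi> u = 2" "\<not> E v u" and u': "u' \<in> S" "\<phi> u' = k - 2" "\<not> E v u'"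
    using not_touchesE by metis
  show "\<not> touches 1"
  proof
    assume "touches 1"
    then obtain z where "z \<in> S" "\<phi> z = 1" "E v z"
      by (rule touchesE)
    then show False
      using x y u k_ge_4 by - (rule no_bull[of z v x u y]; auto simp: adj_S)
  qed
  show "\<not> touches (k - 1)"
  proof
    assume "touches (k - 1)"
    then obtain z where "z \<in> S" "\<phi> z = k - 1" "E v z"
      by (rule touchesE)
    then show False
      using x y u' k_ge_4 by - (rule no_bull[of z v y u' x]; auto simp: adj_S)
  qed
qed

lemma touches_far_imp_covers_before:
  assumes "0 < i" "i + 3 \<le> j" "touches i" "touches j"
  shows "covers (i - 1)"
proof (rule ccontr)
  assume not_before: "\<not> covers (i - 1)"
  have "i < k"
    using touches_le[OF assms(4)] assms(2) by simp
  then have "touches (i + 1)"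
    using touches_inner_imp_covers_side[OF assms(1) _ assms(3)] not_before covers_imp_touches by simp
  then obtain u where "u \<in> S" "\<phi> u = i + 1" "E v u"
    by (rule touchesE)
  moreover obtain w where "w \<in> S" "\<phi> w = i - 1" "\<not> E v w"
    using not_before by (rule not_coversE)
  moreover obtain x y where "x \<in> S" "\<phi> x = i" "E v x" "y \<in> S" "\<phi> y = j" "E v y"
    using assms(3,4) touchesE by metis
  ultimately show False
    using assms(1,2) by - (rule no_bull[of x v u w y]; auto simp: adj_S)
qed

lemma touches_far_imp_covers_after:
  assumes "j < k" "i + 3 \<le> j" "touches i" "touches j"
  shows "covers (j + 1)"
proof (rule ccontr)
  assume not_after: "\<not> covers (j + 1)"
  then have "touches (j - 1)"
    using touches_inner_imp_covers_side[of j] assms covers_imp_touches by fastforce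
  then obtain u where "u \<in> S" "\<phi> u = j - 1" "E v u"
    by (rule touchesE)
  moreover obtain w where "w \<in> S" "\<phi> w = j + 1" "\<not> E v w"
    using not_after by (rule not_coversE)
  moreover obtain x y where "x \<in> S" "\<phi> x = j" "E v x" "y \<in> S" "\<phi> y = i" "E v y"
    using assms(3,4) touchesE by metis
  ultimately show False
    using assms(2) by - (rule no_bull[of x v u w y]; auto simp: adj_S)
qed

lemma neighbourhood_from_touches:
  assumes "\<And>j. touches j \<Longrightarrow> P j" and "\<And>j. j \<le> k \<Longrightarrow> P j \<Longrightarrow> covers j"
  shows "\<forall>x\<in>S. E v x \<longleftrightarrow> P (\<phi> x)"
  using assms path_expansion_le[OF path_exp] unfolding touches_def covers_def by blast

lemma neighbourhood_around:
  assumes "\<And>l. touches l \<Longrightarrow> m \<le> l + 1 \<and> l \<le> m + 1"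
    and "\<And>l. l \<le> k \<Longrightarrow> m \<le> l + 1 \<Longrightarrow> l \<le> m + 1 \<Longrightarrow> covers l"
  shows "\<forall>x\<in>S. E v x \<longleftrightarrow> \<phi> x \<le> m + 1 \<and> m \<le> \<phi> x + 1"
  using neighbourhood_from_touches[of "\<lambda>l. l \<le> m + 1 \<and> m \<le> l + 1"] assms by blast

lemma neighbourhood_wide:
  assumes "touches i" "touches j" "i + 3 \<le> j" and range: "\<And>l. touches l \<Longrightarrow> i \<le> l \<and> l \<le> j"
  shows "\<forall>x\<in>S. E v x \<longleftrightarrow> \<phi> x = 0 \<or> \<phi> x = k"
proof -
  have "i = 0"
  proof (rule ccontr)
    assume "i \<noteq> 0"
    then have "touches (i - 1)"
      using touches_far_imp_covers_before[OF _ assms(3,1,2)] touches_le[OF assms(1)] covers_imp_touches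
      by simp
    then show False
      using range[of "i - 1"] \<open>i \<noteq> 0\<close> by linarith
  qed
  have "j = k"
  proof (rule ccontr)
    assume "j \<noteq> k"
    then have "touches (j + 1)"
      using touches_far_imp_covers_after[OF _ assms(3,1,2)] touches_le[OF assms(2)] covers_imp_touches
      by simp
    then show False
      using range[of "j + 1"] by simp
  qed
  have inner: "\<not> touches l" if l: "0 < l" "l < k" for l
  proof -
    have ends: "touches 0" "touches k"
      using assms(1,2) \<open>i = 0\<close> \<open>j = k\<close> by simp_all
    consider "l = 1" | "l = k - 1" | "2 \<le> l \<and> l + 2 \<le> k"
      using l by arith
    then show ?thesis
      using touches_ends_imp_not_touches_second[OF ends] touches_ends_imp_not_touches_inner[OF ends]
      by cases auto
  qed
  have "covers 0"
    using partly_touched_imp_touches_after[of 0] assms(1) \<open>i = 0\<close> inner k_ge_4 by auto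
  moreover have "covers k"
    using partly_touched_imp_touches_before[of k] assms(2) \<open>j = k\<close> inner k_ge_4 by auto
  ultimately show ?thesis
    using inner touches_le by (intro neighbourhood_from_touches) (auto, fastforce)
qed

lemma touched_range:
  assumes "\<exists>x\<in>S. E v x"
  shows "\<exists>lo hi. touches lo \<and> touches hi \<and> (\<forall>l. touches l \<longrightarrow> lo \<le> l \<and> l \<le> hi)"
proof -
  define T where "T = {i. touches i}"
  have "finite T" "T \<noteq> {}"
    using assms touches_le unfolding T_def touches_def by (auto intro: finite_subset[of _ "{..k}"])
  then have "touches (Min T)" "touches (Max T)"
    using Min_in Max_in unfolding T_def by auto
  moreover have "Min T \<le> l \<and> l \<le> Max T" if "touches l" for l
    using Min_le Max_ge \<open>finite T\<close> that unfolding T_def by auto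
  ultimately show ?thesis
    by blast
qed

lemma neighbourhood_span_1:
  assumes "touches i" and range: "\<And>l. touches l \<Longrightarrow> l = i"
  shows "(\<forall>x\<in>S. E v x \<longleftrightarrow> \<phi> x = 0) \<or> (\<forall>x\<in>S. E v x \<longleftrightarrow> \<phi> x \<le> (k + 1) + 1 \<and> k + 1 \<le> \<phi> x + 1)"
proof -
  have "i \<le> k"
    using touches_le[OF assms(1)] .
  have outside: "\<not> touches l" if "l \<noteq> i" for l
    using range that by blast
  have not_covers: "\<not> covers l" if "l \<le> k" "l \<noteq> i" for l
    using covers_imp_touches outside that by blast
  have "i = 0 \<or> i = k"
  proof (rule ccontr)
    assume "\<not> (i = 0 \<or> i = k)"
    then show False
      using touches_inner_imp_covers_side[OF _ _ assms(1)] not_covers[of "i - 1"] not_covers[of "i + 1"]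
        \<open>i \<le> k\<close> by fastforce
  qed
  moreover have "covers i"
  proof (rule ccontr)
    assume "\<not> covers i"
    then show False
      using calculation partly_touched_imp_touches_after[OF _ assms(1)]
        partly_touched_imp_touches_before[OF _ assms(1)] outside k_ge_4 by fastforce
  qed
  moreover have "\<forall>x\<in>S. E v x \<longleftrightarrow> \<phi> x = i"
    using neighbourhood_from_touches[of "\<lambda>j. j = i"] range \<open>covers i\<close> by blast
  moreover have "\<phi> x = k \<longleftrightarrow> \<phi> x \<le> (k + 1) + 1 \<and> k + 1 \<le> \<phi> x + 1" if "x \<in> S" for x
    using path_expansion_le[OF path_exp that] by linarith
  ultimately show ?thesis
    by auto
qed

lemma span_2_covers:
  assumes "touches i" "touches (i + 1)" and range: "\<And>l. touches l \<Longrightarrow> i \<le> l \<and> l \<le> i + 1"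
  shows "(i = 0 \<or> i + 1 = k) \<and> covers i \<and> covers (i + 1)"
proof -
  have "i + 1 \<le> k"
    using touches_le[OF assms(2)] .
  have outside: "\<not> touches l" if "l < i \<or> i + 1 < l" for l
    using range that by force
  have not_covers: "\<not> covers l" if "l \<le> k" "l < i \<or> i + 1 < l" for l
    using covers_imp_touches outside that by blast
  have "i = 0 \<or> i + 1 = k"
  proof (rule ccontr)
    assume "\<not> (i = 0 \<or> i + 1 = k)"
    then show False
      using touches_adjacent_imp_covers_side[OF _ _ assms(1,2)] not_covers[of "i - 1"]
        not_covers[of "i + 2"] \<open>i + 1 \<le> k\<close> by fastforce
  qed
  moreover have "covers i \<and> covers (i + 1)"
    using calculation
  proof
    assume "i = 0"
    then have "covers 0"
      using touches_inner_imp_covers_side[of 1] assms(2) not_covers[of 2] k_ge_4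
      by (simp add: eval_nat_numeral)
    moreover have "covers 1"
      using k_ge_4 \<open>i = 0\<close> outside[of 2] outside[of 3] assms(2) partly_touched_imp_touches_after[of 1]
      by (auto simp: eval_nat_numeral)
    ultimately show ?thesis
      using \<open>i = 0\<close> by simp
  next
    assume "i + 1 = k"
    then show ?thesis
      using touches_inner_imp_covers_side[of i] partly_touched_imp_touches_before[of i] assms(1)
        not_covers[of "i - 1"] outside[of "i - 1"] outside[of "i - 2"] k_ge_4 by fastforce
  qed
  ultimately show ?thesis
    by blast
qed

lemma neighbourhood_span_2:
  assumes "touches i" "touches (i + 1)" and range: "\<And>l. touches l \<Longrightarrow> i \<le> l \<and> l \<le> i + 1"
  shows "\<exists>m\<le>k + 1. \<forall>x\<in>S. E v x \<longleftrightarrow> \<phi> x \<le> m + 1 \<and> m \<le> \<phi> x + 1"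
proof -
  have cov: "(i = 0 \<or> i + 1 = k) \<and> covers i \<and> covers (i + 1)"
    using span_2_covers[OF assms] .
  define m where "m = (if i = 0 then 0 else k)"
  have "m \<le> k + 1" "m \<le> i + 1" "i \<le> m" "m = 0 \<or> m = k"
    using cov unfolding m_def by auto
  moreover have "\<forall>x\<in>S. E v x \<longleftrightarrow> \<phi> x \<le> m + 1 \<and> m \<le> \<phi> x + 1"
  proof (rule neighbourhood_around)
    fix l :: nat assume "l \<le> k" "m \<le> l + 1" "l \<le> m + 1"
    then have "l = i \<or> l = i + 1"
      using calculation cov by arith
    then show "covers l"
      using cov by blast
  qed (use range calculation cov in force)
  ultimately show ?thesis
    by blast
qed

lemma span_3_covers:
  assumes "touches i" "touches (i + 2)" and range: "\<And>l. touches l \<Longrightarrow> i \<le> l \<and> l \<le> i + 2"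
  shows "covers i \<and> covers (i + 1) \<and> covers (i + 2)"
proof -
  have "i + 2 \<le> k"
    using touches_le[OF assms(2)] .
  have outside: "\<not> touches l" if "l < i \<or> i + 2 < l" for l
    using range that by force
  have not_covers: "\<not> covers l" if "l \<le> k" "l < i \<or> i + 2 < l" for l
    using covers_imp_touches outside that by blast
  have "covers (i + 1)"
  proof (cases "i = 0")
    case True
    then show ?thesis
      using touches_inner_imp_covers_side[of 2] assms(2) not_covers[of 3] k_ge_4
      by (simp add: eval_nat_numeral)
  next
    case False
    then show ?thesis
      using touches_inner_imp_covers_side[of i] assms(1) not_covers[of "i - 1"] \<open>i + 2 \<le> k\<close> by simp
  qed
  moreover have "touches (i + 1)"
    using calculation covers_imp_touches \<open>i + 2 \<le> k\<close> by simp
  moreover have "covers i"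
  proof (cases "i + 3 \<le> k")
    case True
    then show ?thesis
      using \<open>touches (i + 1)\<close> assms(2) not_covers[of "i + 3"]
        touches_adjacent_imp_covers_side[of "i + 1"] by (simp add: eval_nat_numeral)
  next
    case False
    then have "\<not> touches (i - 1)" "\<not> touches (i - 2)"
      using outside k_ge_4 \<open>i + 2 \<le> k\<close> by auto
    then show ?thesis
      using partly_touched_imp_touches_before[of i] assms(1) False k_ge_4 by fastforce
  qed
  moreover have "covers (i + 2)"
  proof (cases "i = 0")
    case True
    then show ?thesis
      using k_ge_4 outside[of 3] outside[of 4] assms(2) partly_touched_imp_touches_after[of 2]
      by (auto simp: eval_nat_numeral)
  next
    case False
    then show ?thesis
      using touches_adjacent_imp_covers_side[of i] assms(1) \<open>touches (i + 1)\<close> \<open>i + 2 \<le> k\<close>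
        not_covers[of "i - 1"] by simp
  qed
  ultimately show ?thesis
    by blast
qed

lemma neighbourhood_span_3:
  assumes "touches i" "touches (i + 2)" and range: "\<And>l. touches l \<Longrightarrow> i \<le> l \<and> l \<le> i + 2"
  shows "\<exists>m\<le>k + 1. \<forall>x\<in>S. E v x \<longleftrightarrow> \<phi> x \<le> m + 1 \<and> m \<le> \<phi> x + 1"
proof -
  have cov: "covers i \<and> covers (i + 1) \<and> covers (i + 2)"
    using span_3_covers[OF assms] .
  have "\<forall>x\<in>S. E v x \<longleftrightarrow> \<phi> x \<le> (i + 1) + 1 \<and> i + 1 \<le> \<phi> x + 1"
  proof (rule neighbourhood_around)
    fix l :: nat assume "l \<le> k" "i + 1 \<le> l + 1" "l \<le> i + 1 + 1"
    then have "l = i \<or> l = i + 1 \<or> l = i + 2"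
      by arith
    then show "covers l"
      using cov by blast
  qed (use range in force)
  then show ?thesis
    using touches_le[OF assms(2)] by (intro exI[of _ "i + 1"]) simp
qed

text \<open>In the first case, \<open>m = k + 1\<close> stands for a neighbourhood consisting of the last clique
  alone; a neighbourhood consisting of the first clique alone is handled by mirroring.\<close>

lemma neighbourhood_cases:
  assumes "\<exists>x\<in>S. E v x"
  shows "(\<exists>m\<le>k + 1. \<forall>x\<in>S. E v x \<longleftrightarrow> \<phi> x \<le> m + 1 \<and> m \<le> \<phi> x + 1)
    \<or> (\<forall>x\<in>S. E v x \<longleftrightarrow> \<phi> x = 0)
    \<or> (\<forall>x\<in>S. E v x \<longleftrightarrow> \<phi> x = 0 \<or> \<phi> x = k)"
proof -
  obtain lo hi where touches: "touches lo" "touches hi" and range: "\<And>l. touches l \<Longrightarrow> lo \<le> l \<and> l \<le> hi"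
    using touched_range[OF assms] by blast
  consider "lo + 3 \<le> hi" | "hi = lo" | "hi = lo + 1" | "hi = lo + 2"
    using range[OF touches(1)] by linarith
  then show ?thesis
  proof cases
    case 1
    then show ?thesis
      using neighbourhood_wide[OF touches 1 range] by blast
  next
    case 2
    then have "l = lo" if "touches l" for l
      using range[OF that] by simp
    from neighbourhood_span_1[OF touches(1) this] show ?thesis
      using order_refl[of "k + 1"] by blast
  next
    case 3
    then show ?thesis
      using neighbourhood_span_2[of lo] touches range by simp
  next
    case 4
    then show ?thesis
      using neighbourhood_span_3[of lo] touches range by simp
  qed
qed

end

section \<open>Maximal path expansions\<close>

lemma connected_graph_edge_leaving:
  assumes "connected_graph V E" "u \<in> V" "u \<in> U" "w \<in> V" "w \<notin> U"
  shows "\<exists>z y. z \<notin> U \<and> y \<in> U \<and> E z y"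
proof -
  have "E\<^sup>*\<^sup>* w u"
    using assms unfolding connected_graph_def by blast
  then show ?thesis
    using assms(3,5) by (induction rule: rtranclp_induct) blast+
qed

lemma connected_graph_vertex_at_distance_two:
  assumes "connected_graph V E" "t \<in> T" "t \<in> V" "c \<in> V" "c \<notin> T" "\<forall>t\<in>T. \<not> E c t"
  shows "\<exists>z y. E z y \<and> z \<notin> T \<and> (\<forall>t\<in>T. \<not> E z t) \<and> y \<notin> T \<and> (\<exists>t\<in>T. E y t)"
proof -
  let ?U = "T \<union> {y. \<exists>t\<in>T. E y t}"
  obtain z y where "z \<notin> ?U" "y \<in> ?U" "E z y"
    using connected_graph_edge_leaving[OF assms(1,3) _ assms(4), of ?U] assms(2,5,6) by blast
  then show ?thesis
    by blast
qed

lemma cycle_expansion_if_outside_sees_ends: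
  assumes "graph V E" "S \<subseteq> V" "S \<noteq> V" and pe: "path_expansion E S k \<phi>"
    and ends: "\<forall>w\<in>V - S. \<forall>x\<in>S. E w x \<longleftrightarrow> \<phi> x = 0 \<or> \<phi> x = k"
    and clique: "\<forall>w\<in>V - S. \<forall>w'\<in>V - S. w \<noteq> w' \<longrightarrow> E w w'"
  shows "expansion_of V E (cycle_V (k + 2)) (cycle_E (k + 2))"
proof -
  define \<psi> where "\<psi> x = (if x \<in> S then \<phi> x else k + 1)" for x
  have "\<psi> ` V = \<phi> ` S \<union> {k + 1}"
    using assms(2,3) unfolding \<psi>_def by auto
  also have "\<dots> = cycle_V (k + 2)"
    using pe unfolding path_expansion_def cycle_V_def by auto
  finally have "\<psi> ` V = cycle_V (k + 2)" .
  moreover have "E x y \<longleftrightarrow> \<psi> x = \<psi> y \<or> cycle_E (k + 2) (\<psi> x) (\<psi> y)"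
    if "x \<in> V" "y \<in> V" "x \<noteq> y" for x y
  proof (cases "x \<in> S"; cases "y \<in> S")
    assume "x \<in> S" "y \<in> S"
    then show ?thesis
      using that path_expansion_adj[OF pe, of x y] path_expansion_le[OF pe, of x]
        path_expansion_le[OF pe, of y]
      unfolding \<psi>_def cycle_E_iff by auto
  next
    assume "x \<in> S" "y \<notin> S"
    moreover have "E x y \<longleftrightarrow> E y x"
      using graph_sym[OF assms(1)] by blast
    ultimately show ?thesis
      using that ends path_expansion_le[OF pe, of x] unfolding \<psi>_def cycle_E_iff by auto
  next
    assume "x \<notin> S" "y \<in> S"
    then show ?thesis
      using that ends path_expansion_le[OF pe, of y] unfolding \<psi>_def cycle_E_iff by auto
  next
    assume "x \<notin> S" "y \<notin> S"
    then show ?thesis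
      using that clique unfolding \<psi>_def by simp
  qed
  ultimately show ?thesis
    unfolding expansion_of_def by blast
qed

context claw_bull_free_graph
begin

lemma outer_vertexI:
  "path_expansion E S k \<phi> \<Longrightarrow> 4 \<le> k \<Longrightarrow> v \<notin> S \<Longrightarrow> outer_vertex V E S k \<phi> v"
  by unfold_locales (use graph claw_bull_free in auto)

lemma path_expansion_extend:
  assumes pe: "path_expansion E S k \<phi>" and "4 \<le> k" "v \<notin> S" "\<exists>x\<in>S. E v x"
    and not_ends: "\<not> (\<forall>x\<in>S. E v x \<longleftrightarrow> \<phi> x = 0 \<or> \<phi> x = k)"
  shows "\<exists>k' \<psi>. k \<le> k' \<and> path_expansion E (insert v S) k' \<psi>"
proof -
  interpret outer_vertex V E S k \<phi> v
    using outer_vertexI assms by blast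
  have insert: "\<exists>k' \<psi>. k \<le> k' \<and> path_expansion E (insert v S) k' \<psi>"
    if "path_expansion E S k \<chi>" "m \<le> k + 1" "\<forall>x\<in>S. E v x \<longleftrightarrow> \<chi> x \<le> m + 1 \<and> m \<le> \<chi> x + 1" for \<chi> m
  proof -
    have "\<forall>x\<in>S. E x v \<longleftrightarrow> E v x"
      using adj_sym by blast
    then show ?thesis
      using path_expansion_insert[OF that(1) \<open>v \<notin> S\<close> adj_irrefl _ that(2,3)] max.cobounded1 by blast
  qed
  consider (around) m where "m \<le> k + 1" "\<forall>x\<in>S. E v x \<longleftrightarrow> \<phi> x \<le> m + 1 \<and> m \<le> \<phi> x + 1"
    | (first) "\<forall>x\<in>S. E v x \<longleftrightarrow> \<phi> x = 0"
    using neighbourhood_cases[OF assms(4)] not_ends by blast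
  then show ?thesis
  proof cases
    case around
    then show ?thesis
      by (rule insert[OF pe])
  next
    case first
    have "\<forall>x\<in>S. E v x \<longleftrightarrow> k - \<phi> x \<le> k + 2 \<and> k + 1 \<le> k - \<phi> x + 1"
    proof
      fix x assume "x \<in> S"
      have "k - \<phi> x \<le> k + 2 \<and> k + 1 \<le> k - \<phi> x + 1 \<longleftrightarrow> \<phi> x = 0"
        using \<open>4 \<le> k\<close> by arith
      then show "E v x \<longleftrightarrow> k - \<phi> x \<le> k + 2 \<and> k + 1 \<le> k - \<phi> x + 1"
        using first \<open>x \<in> S\<close> by simp
    qed
    then show ?thesis
      using insert[OF path_expansion_mirror[OF pe], of "k + 1"] by simp
  qed
qed

end

locale connected_claw_bull_free_graph = claw_bull_free_graph +
  assumes connected: "connected_graph V E"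
begin

lemma outside_sees_ends_and_is_clique:
  assumes "S \<subseteq> V" and pe: "path_expansion E S k \<phi>" and "4 \<le> k"
    and ends: "\<forall>w\<in>V - S. (\<exists>x\<in>S. E w x) \<longrightarrow> (\<forall>x\<in>S. E w x \<longleftrightarrow> \<phi> x = 0 \<or> \<phi> x = k)"
  shows "\<forall>w\<in>V - S. \<forall>x\<in>S. E w x \<longleftrightarrow> \<phi> x = 0 \<or> \<phi> x = k"
    and "\<forall>w\<in>V - S. \<forall>w'\<in>V - S. w \<noteq> w' \<longrightarrow> E w w'"
proof -
  obtain r0 r1 rk where r: "r0 \<in> S" "\<phi> r0 = 0" "r1 \<in> S" "\<phi> r1 = 1" "rk \<in> S" "\<phi> rk = k"
    using path_expansion_surj[OF pe, of 0] path_expansion_surj[OF pe, of 1]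
      path_expansion_surj[OF pe, of k] \<open>4 \<le> k\<close> by auto
  have "\<not> E r0 rk" "E r0 r1"
    using path_expansion_adj[OF pe] r \<open>4 \<le> k\<close> by auto
  have "\<exists>x\<in>S. E w x" if "w \<in> V - S" for w
  proof (rule ccontr)
    assume "\<not> (\<exists>x\<in>S. E w x)"
    moreover have "r0 \<in> V" "w \<in> V" "w \<notin> S"
      using assms(1) r(1) that by auto
    ultimately obtain z y where zy: "E z y" "z \<notin> S" "\<forall>t\<in>S. \<not> E z t" "y \<notin> S" "\<exists>t\<in>S. E y t"
      using connected_graph_vertex_at_distance_two[OF connected r(1)] by blast
    then have "\<forall>x\<in>S. E y x \<longleftrightarrow> \<phi> x = 0 \<or> \<phi> x = k"
      using ends adj_in_V(2)[OF zy(1)] by blast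
    then have "E y r0" "E y rk" "\<not> E z r0" "\<not> E z rk" "z \<noteq> r0" "z \<noteq> rk" "r0 \<noteq> rk"
      using zy r \<open>4 \<le> k\<close> by auto
    then show False
      using no_claw[OF adj_sym[OF zy(1)]] \<open>\<not> E r0 rk\<close> by blast
  qed
  then show attached: "\<forall>w\<in>V - S. \<forall>x\<in>S. E w x \<longleftrightarrow> \<phi> x = 0 \<or> \<phi> x = k"
    using ends by blast
  show "\<forall>w\<in>V - S. \<forall>w'\<in>V - S. w \<noteq> w' \<longrightarrow> E w w'"
  proof (intro ballI impI, rule ccontr)
    fix w w' assume "w \<in> V - S" "w' \<in> V - S" "w \<noteq> w'" "\<not> E w w'"
    moreover have "E w r0" "E w' r0" "\<not> E w r1" "\<not> E w' r1" "w \<noteq> r1" "w' \<noteq> r1"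
      using attached r calculation \<open>4 \<le> k\<close> by auto
    ultimately show False
      using no_claw[OF adj_sym adj_sym \<open>E r0 r1\<close>] by blast
  qed
qed

lemma unextendable_path_expansion_exists:
  assumes "has_induced V E (path_V 4) (path_E 4)"
  shows "\<exists>M k \<phi>. M \<subseteq> V \<and> 4 \<le> k \<and> path_expansion E M k \<phi> \<and>
    (\<forall>w\<in>V - M. (\<exists>x\<in>M. E w x) \<longrightarrow> (\<forall>x\<in>M. E w x \<longleftrightarrow> \<phi> x = 0 \<or> \<phi> x = k))"
proof -
  let ?P = "\<lambda>S. S \<subseteq> V \<and> (\<exists>k \<phi>. 4 \<le> k \<and> path_expansion E S k \<phi>)"
  have "finite V"
    using graph unfolding graph_def by blast
  then have "\<forall>S. ?P S \<longrightarrow> card S < card V + 1"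
    by (simp add: card_mono less_Suc_eq_le)
  moreover obtain S \<phi> where "S \<subseteq> V" "path_expansion E S 4 \<phi>"
    using has_induced_path_imp_path_expansion[OF assms] by blast
  then have "?P S"
    by auto
  ultimately obtain M where "?P M" and maximal: "\<forall>S. ?P S \<longrightarrow> card S \<le> card M"
    using ex_has_greatest_nat[of ?P S card "card V + 1"] by blast
  then obtain k \<phi> where "M \<subseteq> V" "4 \<le> k" and pe: "path_expansion E M k \<phi>"
    by blast
  have "\<forall>w\<in>V - M. (\<exists>x\<in>M. E w x) \<longrightarrow> (\<forall>x\<in>M. E w x \<longleftrightarrow> \<phi> x = 0 \<or> \<phi> x = k)"
  proof (rule ballI, rule impI, rule ccontr)
    fix w assume w: "w \<in> V - M" "\<exists>x\<in>M. E w x" "\<not> (\<forall>x\<in>M. E w x \<longleftrightarrow> \<phi> x = 0 \<or> \<phi> x = k)"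
    then obtain k' \<psi> where "k \<le> k'" "path_expansion E (insert w M) k' \<psi>"
      using path_expansion_extend[OF pe \<open>4 \<le> k\<close>] by blast
    moreover have "4 \<le> k'"
      using \<open>4 \<le> k\<close> \<open>k \<le> k'\<close> by simp
    ultimately have "?P (insert w M)"
      using w(1) \<open>M \<subseteq> V\<close> by blast
    then have "card (insert w M) \<le> card M"
      using maximal by blast
    moreover have "finite M"
      using finite_subset[OF \<open>M \<subseteq> V\<close> \<open>finite V\<close>] .
    ultimately show False
      using w(1) by simp
  qed
  then show ?thesis
    using \<open>M \<subseteq> V\<close> \<open>4 \<le> k\<close> pe by blast
qed

lemma path_or_cycle_expansion_if_induced_P5:
  assumes "has_induced V E (path_V 4) (path_E 4)"
  shows "(\<exists>k\<ge>4. expansion_of V E (path_V k) (path_E k)) \<or> (\<exists>k\<ge>6. expansion_of V E (cycle_V k) (cycle_E k))"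
proof -
  obtain M k \<phi> where "M \<subseteq> V" "4 \<le> k" and pe: "path_expansion E M k \<phi>"
    and ends: "\<forall>w\<in>V - M. (\<exists>x\<in>M. E w x) \<longrightarrow> (\<forall>x\<in>M. E w x \<longleftrightarrow> \<phi> x = 0 \<or> \<phi> x = k)"
    using unextendable_path_expansion_exists[OF assms] by blast
  show ?thesis
  proof (cases "M = V")
    case True
    then show ?thesis
      using path_expansion_expansion_of[OF pe] \<open>4 \<le> k\<close> by blast
  next
    case False
    from outside_sees_ends_and_is_clique[OF \<open>M \<subseteq> V\<close> pe \<open>4 \<le> k\<close> ends]
    have "expansion_of V E (cycle_V (k + 2)) (cycle_E (k + 2))"
      by (rule cycle_expansion_if_outside_sees_ends[OF graph \<open>M \<subseteq> V\<close> False pe])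
    then show ?thesis
      using \<open>4 \<le> k\<close> by (intro disjI2 exI[of _ "k + 2"]) simp
  qed
qed

end

section \<open>An induced path on five vertices\<close>

context claw_bull_free_graph
begin

lemma has_induced_P5I:
  assumes "E a b" "E b c" "E c d" "E d e" "\<not> E a c" "\<not> E a d" "\<not> E a e" "\<not> E b d" "\<not> E b e" "\<not> E c e"
  shows "has_induced V E (path_V 4) (path_E 4)"
proof -
  let ?xs = "[a, b, c, d, e]"
  have sym: "E b a" "E c b" "E d c" "E e d" "\<not> E c a" "\<not> E d a" "\<not> E e a" "\<not> E d b" "\<not> E e b" "\<not> E e c"
    using assms adj_sym by blast+
  have path_V_4: "path_V 4 = {0, 1, 2, 3, 4}"
    by (auto simp: path_V_def)
  have "distinct ?xs"
    using assms sym adj_irrefl by auto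
  then have "inj_on (nth ?xs) (path_V 4)"
    by (rule inj_on_nth) (simp add: path_V_def)
  moreover have "nth ?xs ` path_V 4 \<subseteq> V"
    unfolding path_V_4 using assms adj_in_V by auto
  moreover have "\<forall>i\<in>path_V 4. \<forall>j\<in>path_V 4. E (?xs ! i) (?xs ! j) \<longleftrightarrow> path_E 4 i j"
    unfolding path_V_4 using assms sym adj_irrefl by (simp add: path_E_def)
  ultimately show ?thesis
    unfolding has_induced_def by blast
qed

lemma has_induced_P5_of_P3_and_pendant_edge:
  assumes "E p x" "E x q" "\<not> E p q" "E y p" "\<not> E y q" "E z y" "\<not> E z p" "\<not> E z x" "\<not> E z q"
  shows "has_induced V E (path_V 4) (path_E 4)"
proof (cases "E y x")
  case True
  have "E x y" "E x p" "E y z" "\<not> E x z" "\<not> E p z" "\<not> E q z"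
    using True assms adj_sym by blast+
  then have False
    using no_bull[of x y p q z] assms by blast
  then show ?thesis ..
next
  case False
  then show ?thesis
    using has_induced_P5I[of z y p x q] assms by blast
qed

end

context connected_claw_bull_free_graph
begin

text \<open>A vertex \<open>y\<close> next to the induced path \<open>p x q\<close> with a neighbour \<open>z\<close> away from it exists by
  connectivity; claws and bulls leave only the case that \<open>y\<close> sees exactly one end of the path,
  and then \<open>z y p x q\<close> or \<open>z y q x p\<close> is an induced path.\<close>

lemma has_induced_P5_of_P3_and_far_vertex:
  assumes "E p x" "E x q" "\<not> E p q" "p \<noteq> q" and far: "c \<in> V" "c \<notin> {p, x, q}" "\<forall>t\<in>{p, x, q}. \<not> E c t"
  shows "has_induced V E (path_V 4) (path_E 4)"
proof -
  have "p \<in> V"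
    using adj_in_V assms(1) by blast
  then obtain z y where zy: "E z y" "z \<notin> {p, x, q}" "\<forall>t\<in>{p, x, q}. \<not> E z t" "y \<notin> {p, x, q}"
    "\<exists>t\<in>{p, x, q}. E y t"
    using connected_graph_vertex_at_distance_two[OF connected insertI1 \<open>p \<in> V\<close> far] by blast
  have z: "\<not> E z p" "\<not> E z x" "\<not> E z q"
    using zy(3) by simp_all
  have sym: "E x p" "E q x" "\<not> E q p" "E y z" "\<not> E p z" "\<not> E q z"
    using assms zy(1) z adj_sym by blast+
  consider "E y p" "E y q" | "E y p" "\<not> E y q" | "E y q" "\<not> E y p" | "\<not> E y p" "\<not> E y q"
    by blast
  then show ?thesis
  proof cases
    case 1
    then have False
      using no_claw[of y p q z] assms sym zy(2) by auto
    then show ?thesis ..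
  next
    case 2
    then show ?thesis
      using has_induced_P5_of_P3_and_pendant_edge[OF assms(1,2,3) _ _ zy(1) z] by blast
  next
    case 3
    then show ?thesis
      using has_induced_P5_of_P3_and_pendant_edge[OF sym(2,1,3) _ _ zy(1) z(3,2,1)] by blast
  next
    case 4
    then have "E x y" "\<not> E p y" "\<not> E q y"
      using zy(5) adj_sym by blast+
    then have False
      using no_claw[of x p q y] zy(4) assms sym by auto
    then show ?thesis ..
  qed
qed

lemma has_induced_P5_of_common_neighbour:
  assumes "E x a" "E x b" "c \<in> V" "a \<noteq> b" "a \<noteq> c" "b \<noteq> c" "\<not> E a b" "\<not> E a c" "\<not> E b c"
  shows "has_induced V E (path_V 4) (path_E 4)"
proof -
  have "\<not> E x c"
    using no_claw[of x a b c] assms by blast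
  moreover have "c \<noteq> x"
    using assms(1,8) adj_sym by blast
  moreover have "E a x" "\<not> E c a" "\<not> E c b"
    using assms(1,8,9) adj_sym by blast+
  ultimately show ?thesis
    using has_induced_P5_of_P3_and_far_vertex[of a x b c] assms adj_sym by blast
qed

lemma has_induced_P5_of_independent_triple:
  assumes "a \<in> V" "b \<in> V" "c \<in> V" "a \<noteq> b" "a \<noteq> c" "b \<noteq> c" "\<not> E a b" "\<not> E a c" "\<not> E b c"
  shows "has_induced V E (path_V 4) (path_E 4)"
proof (cases "\<exists>x. E x a \<and> E x b \<or> E x a \<and> E x c \<or> E x b \<and> E x c")
  case True
  have "\<not> E b a" "\<not> E c a" "\<not> E c b"
    using assms adj_sym by blast+
  then show ?thesis
    using True has_induced_P5_of_common_neighbour assms by metis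
next
  case no_common: False
  have "\<not> E b a"
    using assms(7) adj_sym by blast
  then obtain z y where zy: "E z y" "z \<noteq> a" "\<not> E z a" "y \<noteq> a" "E y a"
    using connected_graph_vertex_at_distance_two[OF connected singletonI assms(1,2)] assms(4) by auto
  have "\<not> E y b" "\<not> E y c"
    using no_common zy(5) by blast+
  obtain w where "w \<in> V" "w \<noteq> a" "w \<noteq> z" "\<not> E w z" "\<not> E w a" "\<not> E y w"
  proof (cases "b \<noteq> z \<and> \<not> E b z")
    case True
    then show ?thesis
      using that[of b] assms \<open>\<not> E b a\<close> \<open>\<not> E y b\<close> by blast
  next
    case False
    then have "c \<noteq> z \<and> \<not> E c z"
      using no_common assms(6,9) adj_sym by blast
    moreover have "\<not> E c a"
      using assms(8) adj_sym by blast
    ultimately show ?thesis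
      using that[of c] assms \<open>\<not> E y c\<close> by blast
  qed
  moreover have "E a y" "E y z" "\<not> E a z" "\<not> E w y"
    using zy \<open>\<not> E y w\<close> adj_sym by blast+
  ultimately show ?thesis
    using has_induced_P5_of_P3_and_far_vertex[of a y z w] zy by fastforce
qed

end

lemma (in connected_claw_bull_free_graph) expansion_or_co_triangle_free:
  "(\<exists>k\<ge>4. expansion_of V E (path_V k) (path_E k)) \<or> (\<exists>k\<ge>6. expansion_of V E (cycle_V k) (cycle_E k))
    \<or> triangle_free V (complement V E)"
proof (cases "triangle_free V (complement V E)")
  case False
  then obtain a b c where "a \<in> V" "b \<in> V" "c \<in> V" "a \<noteq> b" "a \<noteq> c" "b \<noteq> c"
    "\<not> E a b" "\<not> E a c" "\<not> E b c"
    unfolding triangle_free_def complement_def by blast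
  then have "has_induced V E (path_V 4) (path_E 4)"
    by (rule has_induced_P5_of_independent_triple)
  from path_or_cycle_expansion_if_induced_P5[OF this] show ?thesis
    by blast
qed simp

theorem theorem1:
  fixes V :: "'a set" and E :: "'a \<Rightarrow> 'a \<Rightarrow> bool"
  assumes "graph V E" and "connected_graph V E"
  shows "claw_bull_free V E \<longleftrightarrow>
           (\<exists>k\<ge>4. expansion_of V E (path_V k) (path_E k))
         \<or> (\<exists>k\<ge>6. expansion_of V E (cycle_V k) (cycle_E k))
         \<or> (connected_graph V E \<and> triangle_free V (complement V E))"
proof -
  have "connected_claw_bull_free_graph V E" if "claw_bull_free V E"
    using assms that by unfold_locales
  then show ?thesis
    using connected_claw_bull_free_graph.expansion_or_co_triangle_free
      claw_bull_free_if_expansion_or_co_triangle_free[OF assms(1)] assms(2)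
    by fastforce
qed

end
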